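(* Let $L>0$, $a>0$, $u_0>0$, and let $\texttt{sat}:\mathbb{R}\to\mathbb{R}$ be $\texttt{sat}(s)=-u_0$ if $s<-u_0$, $\texttt{sat}(s)=s$ if $-u_0\le s\le u_0$, $\texttt{sat}(s)=u_0$ if $s>u_0$. Let $\tilde\lambda>0$ and $u\in H^3_L(0,L)$. Then there exists $\tilde u\in H^3(0,L)$ solving \[ \begin{cases} \tilde\lambda\tilde u+\tilde u'''+\tilde u'+a\,\texttt{sat}(\tilde u)=\tilde\lambda u \quad\text{on }(0,L),\\ \tilde u(0)=\tilde u(L)=\tilde u'(L)=0, \end{cases} \] where $\texttt{sat}$ is applied pointwise.
   Context: $H^3(0,L)$ is the set of $u\in L^2(0,L)$ with $u_x,u_{xx},u_{xxx}\in L^2(0,L)$, and $H^3_L(0,L):=\{w\in H^3(0,L): w(0)=w(L)=w'(L)=0\}$. *)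

theory Defs
  imports "HOL-Analysis.Analysis"
begin

definition sat :: "real \<Rightarrow> real \<Rightarrow> real" where
  "sat u0 s = (if s < - u0 then - u0 else if s \<le> u0 then s else u0)"

(* phi is a test function in C_c^\<infinity>(0,L): smooth on the real line, all
   derivatives given by D, with support contained in a compact subset of (0,L) *)
definition test_fun :: "real \<Rightarrow> (real \<Rightarrow> real) \<Rightarrow> bool" where
  "test_fun L phi \<longleftrightarrow>
     (\<exists>D :: nat \<Rightarrow> real \<Rightarrow> real. D 0 = phi \<and>
        (\<forall>k x. (D k has_real_derivative D (Suc k) x) (at x))) \<and>
     (\<exists>e>0. \<forall>x. x < e \<or> x > L - e \<longrightarrow> phi x = 0)"

definition L2_on :: "real \<Rightarrow> (real \<Rightarrow> real) \<Rightarrow> bool" where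
  "L2_on L f \<longleftrightarrow> set_borel_measurable lborel {0<..<L} f \<and>
     set_integrable lborel {0<..<L} (\<lambda>x. (f x)\<^sup>2)"

definition weak_deriv :: "real \<Rightarrow> (real \<Rightarrow> real) \<Rightarrow> (real \<Rightarrow> real) \<Rightarrow> bool" where
  "weak_deriv L f g \<longleftrightarrow>
     (\<forall>phi. test_fun L phi \<longrightarrow>
        (LINT x:{0<..<L}|lborel. f x * deriv phi x) = - (LINT x:{0<..<L}|lborel. g x * phi x))"

(* u \<in> H^3(0,L) with weak derivatives u1 = u', u2 = u'', u3 = u''';
   u, u1, u2 are taken as the continuous representatives on [0,L]
   (which always exist), so point values such as u 0, u1 L are meaningful. *)
definition H3 :: "real \<Rightarrow> (real \<Rightarrow> real) \<Rightarrow> (real \<Rightarrow> real) \<Rightarrow> (real \<Rightarrow> real)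
                    \<Rightarrow> (real \<Rightarrow> real) \<Rightarrow> bool" where
  "H3 L u u1 u2 u3 \<longleftrightarrow>
     L2_on L u \<and> L2_on L u1 \<and> L2_on L u2 \<and> L2_on L u3 \<and>
     weak_deriv L u u1 \<and> weak_deriv L u1 u2 \<and> weak_deriv L u2 u3 \<and>
     continuous_on {0..L} u \<and> continuous_on {0..L} u1 \<and> continuous_on {0..L} u2"

end

theory Submission
  imports Defs
begin

text \<open>
  Write the unknown as \<open>v = J (J p)\<close> with \<open>J g t = \<integral>\<^sub>t\<^sup>L g\<close>; then \<open>v(L) = v'(L) = 0\<close>,
  \<open>v' = -J p\<close>, \<open>v'' = p\<close>, and the equation becomes the integral equation
  \<open>p = c - J (\<lambda>u - \<lambda>v - v' - a sat v)\<close> with the free parameter \<open>c = v''(L)\<close>.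
  For every \<open>c\<close> it has a continuous solution \<open>p\<^sub>c\<close>, since the right-hand side halves
  distances in the sup norm weighted by \<open>exp (M (L - t))\<close> for \<open>M\<close> large.
  It remains to shoot for \<open>v(0) = 0\<close>: the map \<open>V c = J (J p\<^sub>c) 0\<close> is continuous and differs
  from the linear map \<open>c \<mapsto> c w\<^sub>0\<close> of the problem with \<open>u = 0\<close>, \<open>a = 0\<close> by a bounded amount,
  because \<open>sat\<close> is bounded. The energy \<open>2 w'' w - w'\<^sup>2 + w\<^sup>2\<close> decreases along solutions of
  \<open>\<lambda>w + w''' + w' = 0\<close>, so this linear problem has no nonzero solution with
  \<open>w(0) = w(L) = w'(L) = 0\<close>; hence \<open>w\<^sub>0 \<noteq> 0\<close> and \<open>V\<close> has a root by the intermediate value theorem.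
\<close>

definition tail_int :: "real \<Rightarrow> (real \<Rightarrow> real) \<Rightarrow> real \<Rightarrow> real" where
  "tail_int L g t = integral {t..L} g"

lemma tail_int_has_real_derivative_within:
  assumes "continuous_on {0..L} g" "t \<in> {0..L}"
  shows "(tail_int L g has_real_derivative - g t) (at t within {0..L})"
  unfolding tail_int_def[abs_def] using integral_has_real_derivative'[OF assms] .

lemma continuous_on_tail_int:
  assumes "continuous_on {0..L} g"
  shows "continuous_on {0..L} (tail_int L g)"
  unfolding continuous_on_eq_continuous_within
  using tail_int_has_real_derivative_within[OF assms] DERIV_continuous by blast

lemma tail_int_has_real_derivative:
  assumes "continuous_on {0..L} g" "t \<in> {0<..<L}"
  shows "(tail_int L g has_real_derivative - g t) (at t)"
  using tail_int_has_real_derivative_within[OF assms(1), of t] assms(2)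
  by (simp add: at_within_Icc_at)

lemma tail_int_right_end [simp]: "tail_int L g L = 0"
  by (simp add: tail_int_def)

lemma tail_int_cmult: "tail_int L (\<lambda>s. c * f s) = (\<lambda>t. c * tail_int L f t)"
  unfolding tail_int_def by simp

lemma tail_int_diff:
  assumes "continuous_on {0..L} f" "continuous_on {0..L} g" "t \<in> {0..L}"
  shows "tail_int L (\<lambda>s. f s - g s) t = tail_int L f t - tail_int L g t"
proof -
  have "{t..L} \<subseteq> {0..L}" using assms(3) by auto
  then have "f integrable_on {t..L}" "g integrable_on {t..L}"
    using assms by (meson integrable_continuous_real continuous_on_subset)+
  then show ?thesis unfolding tail_int_def by (rule integral_diff)
qed

lemma abs_tail_int_le:
  assumes "continuous_on {0..L} g" "t \<in> {0..L}" "\<And>r. r \<in> {0..L} \<Longrightarrow> \<bar>g r\<bar> \<le> B"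
  shows "\<bar>tail_int L g t\<bar> \<le> B * L"
proof -
  have sub: "{t..L} \<subseteq> {0..L}" using assms(2) by auto
  then have "g integrable_on {t..L}"
    using assms by (meson integrable_continuous_real continuous_on_subset)
  then have "norm (integral {t..L} g) \<le> integral {t..L} (\<lambda>_. B)"
    by (rule integral_norm_bound_integral) (use assms(3) sub in auto)
  also have "\<dots> = (L - t) * B" using assms(2) by simp
  also have "\<dots> \<le> B * L" using assms(2) assms(3)[of t] by (simp add: algebra_simps)
  finally show ?thesis by (simp add: tail_int_def)
qed

lemma abs_tail_int_le_exp:
  assumes "continuous_on {0..L} g" "t \<in> {0..L}" "M > 0"
    and bound: "\<And>r. r \<in> {0..L} \<Longrightarrow> \<bar>g r\<bar> \<le> B * exp (M * (L - r))"
  shows "\<bar>tail_int L g t\<bar> \<le> B / M * exp (M * (L - t))"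
proof -
  have sub: "{t..L} \<subseteq> {0..L}" using assms(2) by auto
  then have "g integrable_on {t..L}"
    using assms by (meson integrable_continuous_real continuous_on_subset)
  have "0 \<le> B * exp (M * (L - t))" using bound[of t] assms(2) by linarith
  then have B: "B \<ge> 0" by (simp add: zero_le_mult_iff)
  have primitive: "((\<lambda>r. B * exp (M * (L - r))) has_integral
       B / M * exp (M * (L - t)) - B / M) {t..L}"
  proof -
    have "((\<lambda>r. B * exp (M * (L - r))) has_integral
       (- B / M * exp (M * (L - L))) - (- B / M * exp (M * (L - t)))) {t..L}"
    proof (rule fundamental_theorem_of_calculus)
      fix x assume "x \<in> {t..L}"
      have "((\<lambda>r. - B / M * exp (M * (L - r))) has_real_derivative
            B * exp (M * (L - x))) (at x within {t..L})"
        by (rule derivative_eq_intros refl)+ (use assms(3) in simp)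
      then show "((\<lambda>r. - B / M * exp (M * (L - r))) has_vector_derivative
            B * exp (M * (L - x))) (at x within {t..L})"
        by (simp add: has_real_derivative_iff_has_vector_derivative)
    qed (use assms(2) in auto)
    then show ?thesis by simp
  qed
  have "norm (integral {t..L} g) \<le> integral {t..L} (\<lambda>r. B * exp (M * (L - r)))"
    by (rule integral_norm_bound_integral)
       (use \<open>g integrable_on {t..L}\<close> primitive bound sub in auto)
  also have "\<dots> = B / M * exp (M * (L - t)) - B / M"
    using integral_unique[OF primitive] .
  also have "\<dots> \<le> B / M * exp (M * (L - t))" using B assms(3) by simp
  finally show ?thesis by (simp add: tail_int_def)
qed

lemma abs_tail_int_diff_le_exp:
  assumes "continuous_on {0..L} p" "continuous_on {0..L} q" "M > 0" "t \<in> {0..L}"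
    "\<And>r. r \<in> {0..L} \<Longrightarrow> \<bar>p r - q r\<bar> \<le> B * exp (M * (L - r))"
  shows "\<bar>tail_int L p t - tail_int L q t\<bar> \<le> B / M * exp (M * (L - t))"
proof -
  have "continuous_on {0..L} (\<lambda>s. p s - q s)" by (intro continuous_intros assms)
  from abs_tail_int_le_exp[OF this assms(4,3,5)] show ?thesis
    using tail_int_diff[OF assms(1,2,4)] by simp
qed

lemma abs_tail_int2_diff_le_exp:
  assumes "continuous_on {0..L} p" "continuous_on {0..L} q" "M > 0" "t \<in> {0..L}"
    "\<And>r. r \<in> {0..L} \<Longrightarrow> \<bar>p r - q r\<bar> \<le> B * exp (M * (L - r))"
  shows "\<bar>tail_int L (tail_int L p) t - tail_int L (tail_int L q) t\<bar>
           \<le> B / M / M * exp (M * (L - t))"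
  using abs_tail_int_diff_le_exp[OF assms(1-3)] assms
  by (intro abs_tail_int_diff_le_exp continuous_on_tail_int) auto

lemma abs_sat_diff_le: "u0 \<ge> 0 \<Longrightarrow> \<bar>sat u0 x - sat u0 y\<bar> \<le> \<bar>x - y\<bar>"
  by (simp add: sat_def)

lemma abs_sat_le: "u0 \<ge> 0 \<Longrightarrow> \<bar>sat u0 x\<bar> \<le> u0"
  by (simp add: sat_def abs_le_iff)

lemma continuous_on_sat:
  assumes "u0 \<ge> 0" "continuous_on S f"
  shows "continuous_on S (\<lambda>x. sat u0 (f x))"
proof -
  have "sat u0 x = max (- u0) (min x u0)" for x using assms(1) by (simp add: sat_def)
  then show ?thesis by (simp only:) (intro continuous_intros assms(2))
qed

subsection \<open>Weighted contractions\<close>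

definition weighted_contraction ::
    "real set \<Rightarrow> (real \<Rightarrow> real) \<Rightarrow> ((real \<Rightarrow> real) \<Rightarrow> real \<Rightarrow> real) \<Rightarrow> bool" where
  "weighted_contraction K w T \<longleftrightarrow>
     (\<forall>p q D. continuous_on K p \<longrightarrow> continuous_on K q \<longrightarrow>
        (\<forall>r\<in>K. \<bar>p r - q r\<bar> \<le> D * w r) \<longrightarrow> (\<forall>t\<in>K. \<bar>T p t - T q t\<bar> \<le> D / 2 * w t))"

lemma weighted_bound_self_improving:
  fixes \<delta> w :: "'a::topological_space \<Rightarrow> real"
  assumes "compact K" "continuous_on K \<delta>" "continuous_on K w" "\<And>r. r \<in> K \<Longrightarrow> w r > 0"
    and improve: "\<And>D. \<forall>r\<in>K. \<bar>\<delta> r\<bar> \<le> D * w r \<Longrightarrow> \<forall>r\<in>K. \<bar>\<delta> r\<bar> \<le> (\<alpha> + D / 2) * w r"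
    and r: "r \<in> K"
  shows "\<bar>\<delta> r\<bar> \<le> 2 * \<alpha> * w r"
proof -
  define g where "g r = \<bar>\<delta> r\<bar> / w r" for r
  have "continuous_on K g"
    unfolding g_def[abs_def] by (intro continuous_intros assms(2,3)) (use assms(4) in fastforce)
  then have bdd: "bdd_above (g ` K)"
    by (meson assms(1) bounded_imp_bdd_above compact_continuous_image compact_imp_bounded)
  define S where "S = Sup (g ` K)"
  have S: "\<forall>r\<in>K. \<bar>\<delta> r\<bar> \<le> S * w r"
  proof
    fix r assume "r \<in> K"
    with bdd have "g r \<le> S" unfolding S_def by (simp add: cSUP_upper)
    then show "\<bar>\<delta> r\<bar> \<le> S * w r" using assms(4)[OF \<open>r \<in> K\<close>] by (simp add: g_def divide_le_eq)
  qed
  have "S \<le> \<alpha> + S / 2" unfolding S_def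
  proof (rule cSUP_least)
    show "K \<noteq> {}" using r by blast
    fix r assume "r \<in> K"
    then show "g r \<le> \<alpha> + Sup (g ` K) / 2"
      using improve[OF S] assms(4)[OF \<open>r \<in> K\<close>] unfolding g_def S_def by (simp add: divide_le_eq)
  qed
  then have "S * w r \<le> 2 * \<alpha> * w r" using assms(4)[OF r] by simp
  with S r show ?thesis by fastforce
qed

lemma fixpoint_stability:
  fixes K :: "real set"
  assumes "compact K" "continuous_on K w" "\<And>r. r \<in> K \<Longrightarrow> w r > 0"
    and S: "weighted_contraction K w S"
    and p: "continuous_on K p" "\<And>t. t \<in> K \<Longrightarrow> p t = T p t"
    and q: "continuous_on K q" "\<And>t. t \<in> K \<Longrightarrow> q t = S q t"
    and close: "\<And>t. t \<in> K \<Longrightarrow> \<bar>T p t - S p t\<bar> \<le> \<alpha> * w t"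
    and t: "t \<in> K"
  shows "\<bar>p t - q t\<bar> \<le> 2 * \<alpha> * w t"
proof (rule weighted_bound_self_improving[OF assms(1) _ assms(2,3) _ t])
  show "continuous_on K (\<lambda>r. p r - q r)" by (intro continuous_intros p(1) q(1))
  fix D assume "\<forall>r\<in>K. \<bar>p r - q r\<bar> \<le> D * w r"
  with S p(1) q(1) have "\<forall>r\<in>K. \<bar>S p r - S q r\<bar> \<le> D / 2 * w r"
    unfolding weighted_contraction_def by blast
  show "\<forall>r\<in>K. \<bar>p r - q r\<bar> \<le> (\<alpha> + D / 2) * w r"
  proof
    fix r assume "r \<in> K"
    have "p r - q r = (T p r - S p r) + (S p r - S q r)" using p(2) q(2) \<open>r \<in> K\<close> by simp
    then have "\<bar>p r - q r\<bar> \<le> \<bar>T p r - S p r\<bar> + \<bar>S p r - S q r\<bar>" by linarith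
    with close[OF \<open>r \<in> K\<close>] \<open>\<forall>r\<in>K. \<bar>S p r - S q r\<bar> \<le> D / 2 * w r\<close> \<open>r \<in> K\<close>
    show "\<bar>p r - q r\<bar> \<le> (\<alpha> + D / 2) * w r" by (fastforce simp: algebra_simps)
  qed
qed

text \<open>Banach's theorem in the weighted sup norm: \<open>q \<mapsto> T (w q) / w\<close>, transported to bounded
  continuous functions on the line by clamping to \<open>[0, L]\<close>, halves the ordinary sup distance.\<close>

lemma weighted_contraction_fixpoint:
  assumes "L \<ge> 0" "continuous_on {0..L} w" "\<And>r. r \<in> {0..L} \<Longrightarrow> w r > 0"
    and T_cont: "\<And>p. continuous_on {0..L} p \<Longrightarrow> continuous_on {0..L} (T p)"
    and T: "weighted_contraction {0..L} w T"
  shows "\<exists>p. continuous_on {0..L} p \<and> (\<forall>t\<in>{0..L}. p t = T p t)"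
proof -
  define P where "P q = (\<lambda>s. w s * apply_bcontfun q s)" for q :: "real \<Rightarrow>\<^sub>C real"
  have cP: "continuous_on {0..L} (P q)" for q
    unfolding P_def by (intro continuous_intros assms(2)) auto
  define h where "h q t = T (P q) t / w t" for q t
  have "continuous_on (cbox 0 L) (h q)" for q
    unfolding h_def[abs_def] cbox_interval
    by (intro continuous_intros T_cont cP assms(2)) (use assms(3) in fastforce)
  then have "\<exists>g. \<forall>x. apply_bcontfun g x = h q (clamp 0 L x)" for q
    using continuous_on_cbox_bcontfunE by metis
  then obtain \<Phi> where \<Phi>: "\<And>q x. apply_bcontfun (\<Phi> q) x = h q (clamp 0 L x)"
    by metis
  have clamp: "clamp 0 L x \<in> {0..L}" "x \<in> {0..L} \<Longrightarrow> clamp 0 L x = x" for x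
    using clamp_in_interval[of 0 L x] clamp_cancel_cbox[of x 0 L] assms(1)
    by (auto simp: cbox_interval)
  have "dist (\<Phi> q1) (\<Phi> q2) \<le> 1/2 * dist q1 q2" for q1 q2
  proof (rule dist_bound)
    fix x
    define t where "t = clamp 0 L x"
    have t: "t \<in> {0..L}" unfolding t_def by (rule clamp(1))
    have "\<bar>P q1 r - P q2 r\<bar> \<le> dist q1 q2 * w r" if "r \<in> {0..L}" for r
    proof -
      have "\<bar>P q1 r - P q2 r\<bar> = w r * \<bar>apply_bcontfun q1 r - apply_bcontfun q2 r\<bar>"
        unfolding P_def using assms(3)[OF that] by (simp add: abs_mult right_diff_distrib[symmetric])
      also have "\<dots> \<le> w r * dist q1 q2"
        using dist_bounded[of q1 r q2] assms(3)[OF that] by (simp add: dist_real_def)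
      finally show ?thesis by (simp add: mult.commute)
    qed
    with T cP have "\<bar>T (P q1) t - T (P q2) t\<bar> \<le> dist q1 q2 / 2 * w t"
      using t unfolding weighted_contraction_def by blast
    then show "dist (apply_bcontfun (\<Phi> q1) x) (apply_bcontfun (\<Phi> q2) x) \<le> 1/2 * dist q1 q2"
      unfolding \<Phi> h_def t_def[symmetric] dist_real_def using assms(3)[OF t]
      by (simp add: diff_divide_distrib[symmetric] divide_le_eq)
  qed
  then obtain q where q: "\<Phi> q = q" using banach_fix_type[of "1/2" \<Phi>] by auto
  show ?thesis
  proof (intro exI conjI ballI)
    show "continuous_on {0..L} (P q)" by (rule cP)
    fix t assume t: "t \<in> {0..L}"
    have "apply_bcontfun q t = h q t" using \<Phi>[of q t] q clamp(2)[OF t] by simp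
    then show "P q t = T (P q) t"
      unfolding P_def h_def using assms(3)[OF t] by (simp add: field_simps)
  qed
qed

lemma abs_triangle3: "\<bar>- x + y - z\<bar> \<le> \<bar>x\<bar> + \<bar>y\<bar> + \<bar>z :: real\<bar>"
  by arith

subsection \<open>The integral equation for \<open>v''\<close>\<close>

definition shooting_rhs ::
    "real \<Rightarrow> real \<Rightarrow> real \<Rightarrow> real \<Rightarrow> (real \<Rightarrow> real) \<Rightarrow> (real \<Rightarrow> real) \<Rightarrow> real \<Rightarrow> real" where
  "shooting_rhs L lam u0 a u p s =
     lam * u s - lam * tail_int L (tail_int L p) s + tail_int L p s
       - a * sat u0 (tail_int L (tail_int L p) s)"

definition shooting_map ::
    "real \<Rightarrow> real \<Rightarrow> real \<Rightarrow> real \<Rightarrow> (real \<Rightarrow> real) \<Rightarrow> real \<Rightarrow> (real \<Rightarrow> real) \<Rightarrow> real \<Rightarrow> real" where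
  "shooting_map L lam u0 a u c p t = c - tail_int L (shooting_rhs L lam u0 a u p) t"

lemma continuous_on_shooting_rhs:
  assumes "u0 \<ge> 0" "continuous_on {0..L} u" "continuous_on {0..L} p"
  shows "continuous_on {0..L} (shooting_rhs L lam u0 a u p)"
proof -
  have "continuous_on {0..L} (tail_int L p)" by (rule continuous_on_tail_int[OF assms(3)])
  moreover from this have "continuous_on {0..L} (tail_int L (tail_int L p))"
    by (rule continuous_on_tail_int)
  ultimately show ?thesis unfolding shooting_rhs_def[abs_def]
    by (intro continuous_intros continuous_on_sat assms(1,2))
qed

lemma continuous_on_shooting_map:
  assumes "u0 \<ge> 0" "continuous_on {0..L} u" "continuous_on {0..L} p"
  shows "continuous_on {0..L} (shooting_map L lam u0 a u c p)"
  unfolding shooting_map_def[abs_def]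
  by (intro continuous_intros continuous_on_tail_int continuous_on_shooting_rhs assms)

lemma abs_shooting_rhs_diff_le_exp:
  assumes "lam \<ge> 0" "a \<ge> 0" "u0 \<ge> 0" "M > 0"
    and p: "continuous_on {0..L} p" and q: "continuous_on {0..L} q"
    and pq: "\<And>r. r \<in> {0..L} \<Longrightarrow> \<bar>p r - q r\<bar> \<le> D * exp (M * (L - r))"
    and s: "s \<in> {0..L}"
  shows "\<bar>shooting_rhs L lam u0 a u p s - shooting_rhs L lam u0 a u q s\<bar>
           \<le> ((lam + a) * (D / M / M) + D / M) * exp (M * (L - s))"
proof -
  let ?X = "tail_int L (tail_int L p) s - tail_int L (tail_int L q) s"
  let ?Y = "tail_int L p s - tail_int L q s"
  let ?Z = "sat u0 (tail_int L (tail_int L p) s) - sat u0 (tail_int L (tail_int L q) s)"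
  let ?E = "exp (M * (L - s))"
  have Y: "\<bar>?Y\<bar> \<le> D / M * ?E" by (rule abs_tail_int_diff_le_exp[OF p q assms(4) s pq])
  have X: "\<bar>?X\<bar> \<le> D / M / M * ?E" by (rule abs_tail_int2_diff_le_exp[OF p q assms(4) s pq])
  have "\<bar>shooting_rhs L lam u0 a u p s - shooting_rhs L lam u0 a u q s\<bar> = \<bar>- (lam * ?X) + ?Y - a * ?Z\<bar>"
    unfolding shooting_rhs_def by (simp add: algebra_simps)
  also have "\<dots> \<le> \<bar>lam * ?X\<bar> + \<bar>?Y\<bar> + \<bar>a * ?Z\<bar>"
    by (rule abs_triangle3)
  also have "\<dots> = lam * \<bar>?X\<bar> + \<bar>?Y\<bar> + a * \<bar>?Z\<bar>" using assms(1,2) by (simp add: abs_mult)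
  also have "\<dots> \<le> lam * (D / M / M * ?E) + D / M * ?E + a * (D / M / M * ?E)"
  proof -
    have "\<bar>?Z\<bar> \<le> D / M / M * ?E" using abs_sat_diff_le[OF assms(3)] X by (rule order_trans)
    then have "a * \<bar>?Z\<bar> \<le> a * (D / M / M * ?E)" using assms(2) by (rule mult_left_mono)
    moreover have "lam * \<bar>?X\<bar> \<le> lam * (D / M / M * ?E)" using X assms(1) by (rule mult_left_mono)
    ultimately show ?thesis using Y by linarith
  qed
  also have "\<dots> = ((lam + a) * (D / M / M) + D / M) * ?E" by (simp add: algebra_simps add_divide_distrib)
  finally show ?thesis .
qed

lemma shooting_map_weighted_contraction:
  assumes "lam \<ge> 0" "a \<ge> 0" "u0 \<ge> 0" "lam + a + 2 \<le> M" "continuous_on {0..L} u"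
  shows "weighted_contraction {0..L} (\<lambda>t. exp (M * (L - t))) (shooting_map L lam u0 a u c)"
  unfolding weighted_contraction_def
proof (intro allI impI ballI)
  fix p q D t
  assume p: "continuous_on {0..L} p" and q: "continuous_on {0..L} q" and t: "t \<in> {0..L}"
    and pq: "\<forall>r\<in>{0..L}. \<bar>p r - q r\<bar> \<le> D * exp (M * (L - r))"
  have M: "M \<ge> 2" using assms by simp
  have "\<bar>p t - q t\<bar> \<le> D * exp (M * (L - t))" using pq t by blast
  then have "0 \<le> D * exp (M * (L - t))" by (rule order_trans[OF abs_ge_zero])
  then have D: "D \<ge> 0" by (simp add: zero_le_mult_iff)
  define B where "B = (lam + a) * (D / M / M) + D / M"
  have "B \<le> 2 * D / M"
  proof -
    have "(lam + a) * (D / M / M) \<le> M * (D / M / M)"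
      using assms D by (intro mult_right_mono) auto
    then show ?thesis using M unfolding B_def by (simp add: field_simps)
  qed
  then have "B / M \<le> 2 * D / M / M" using M by (intro divide_right_mono) auto
  also have "\<dots> \<le> D / 2"
    using D M mult_mono[OF M M] mult_left_mono[of 4 "M * M" D] by (simp add: field_simps)
  finally have "B / M \<le> D / 2" .
  have "\<bar>shooting_map L lam u0 a u c p t - shooting_map L lam u0 a u c q t\<bar>
        = \<bar>tail_int L (shooting_rhs L lam u0 a u p) t - tail_int L (shooting_rhs L lam u0 a u q) t\<bar>"
    unfolding shooting_map_def by simp
  also have "\<dots> \<le> B / M * exp (M * (L - t))"
    unfolding B_def using M pq
    by (intro abs_tail_int_diff_le_exp abs_shooting_rhs_diff_le_exp continuous_on_shooting_rhs
        assms p q t) auto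
  also have "\<dots> \<le> D / 2 * exp (M * (L - t))"
    using \<open>B / M \<le> D / 2\<close> by (rule mult_right_mono) simp
  finally show "\<bar>shooting_map L lam u0 a u c p t - shooting_map L lam u0 a u c q t\<bar>
      \<le> D / 2 * exp (M * (L - t))" .
qed

definition shooting_fixpoint ::
    "real \<Rightarrow> real \<Rightarrow> real \<Rightarrow> real \<Rightarrow> (real \<Rightarrow> real) \<Rightarrow> real \<Rightarrow> real \<Rightarrow> real" where
  "shooting_fixpoint L lam u0 a u c =
     (SOME p. continuous_on {0..L} p \<and> (\<forall>t\<in>{0..L}. p t = shooting_map L lam u0 a u c p t))"

lemma shooting_fixpoint:
  assumes "L \<ge> 0" "lam \<ge> 0" "a \<ge> 0" "u0 \<ge> 0" "continuous_on {0..L} u"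
  shows continuous_on_shooting_fixpoint: "continuous_on {0..L} (shooting_fixpoint L lam u0 a u c)"
    and shooting_fixpoint_eq: "t \<in> {0..L} \<Longrightarrow>
      shooting_fixpoint L lam u0 a u c t = shooting_map L lam u0 a u c (shooting_fixpoint L lam u0 a u c) t"
proof -
  have "\<exists>p. continuous_on {0..L} p \<and> (\<forall>t\<in>{0..L}. p t = shooting_map L lam u0 a u c p t)"
    by (rule weighted_contraction_fixpoint[OF assms(1) _ _ continuous_on_shooting_map[OF assms(4,5)]
          shooting_map_weighted_contraction[OF assms(2-4) order_refl assms(5)]])
       (auto intro!: continuous_intros)
  from someI_ex[OF this] show "continuous_on {0..L} (shooting_fixpoint L lam u0 a u c)"
    and "t \<in> {0..L} \<Longrightarrow>
      shooting_fixpoint L lam u0 a u c t = shooting_map L lam u0 a u c (shooting_fixpoint L lam u0 a u c) t"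
    unfolding shooting_fixpoint_def by blast+
qed

lemma shooting_rhs_linear_scale:
  "shooting_rhs L lam u0 0 (\<lambda>_. 0) (\<lambda>s. c * p s) = (\<lambda>s. c * shooting_rhs L lam u0 0 (\<lambda>_. 0) p s)"
  by (simp add: fun_eq_iff shooting_rhs_def tail_int_cmult algebra_simps)

lemma shooting_fixpoint_has_real_derivative:
  assumes "u0 \<ge> 0" "continuous_on {0..L} u" "continuous_on {0..L} p"
    and fixed: "\<And>t. t \<in> {0..L} \<Longrightarrow> p t = shooting_map L lam u0 a u c p t"
    and x: "x \<in> {0<..<L}"
  shows "(p has_real_derivative shooting_rhs L lam u0 a u p x) (at x)"
proof -
  have "(shooting_map L lam u0 a u c p has_real_derivative shooting_rhs L lam u0 a u p x) (at x)"
    unfolding shooting_map_def[abs_def]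
    using DERIV_diff[OF DERIV_const tail_int_has_real_derivative[OF continuous_on_shooting_rhs[OF assms(1-3)] x]]
    by simp
  then show ?thesis
    by (rule has_field_derivative_transform_within_open[OF _ open_greaterThanLessThan x])
       (use fixed in auto)
qed

lemma tail_int2_has_real_derivatives:
  assumes "continuous_on {0..L} p" "x \<in> {0<..<L}"
  shows "(tail_int L (tail_int L p) has_real_derivative - tail_int L p x) (at x)"
    and "((\<lambda>t. - tail_int L p t) has_real_derivative p x) (at x)"
  using tail_int_has_real_derivative[OF continuous_on_tail_int[OF assms(1)] assms(2)]
    DERIV_minus[OF tail_int_has_real_derivative[OF assms]] by simp_all

subsection \<open>The homogeneous linear problem\<close>

lemma zero_on_Icc_if_zero_on_open:
  fixes f :: "real \<Rightarrow> real"
  assumes "L > 0" "continuous_on {0..L} f" "\<And>x. x \<in> {0<..<L} \<Longrightarrow> f x = 0" "x \<in> {0..L}"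
  shows "f x = 0"
  using continuous_constant_on_closure[of "{0<..<L}" f 0 x] assms by simp

lemma derivative_zero_if_zero_on_open:
  fixes f :: "real \<Rightarrow> real"
  assumes "(f has_real_derivative f') (at x)" "\<And>y. y \<in> {0<..<L} \<Longrightarrow> f y = 0" "x \<in> {0<..<L}"
  shows "f' = 0"
proof -
  have "(f has_real_derivative 0) (at x)"
    by (rule has_field_derivative_transform_within_open[OF DERIV_const open_greaterThanLessThan assms(3)])
       (use assms(2) in auto)
  with assms(1) show ?thesis by (rule DERIV_unique)
qed

text \<open>Along a solution of \<open>\<lambda>w + w''' + w' = 0\<close> the energy \<open>2 w'' w - w'\<^sup>2 + w\<^sup>2\<close> has
  derivative \<open>-2\<lambda>w\<^sup>2\<close>, and the boundary conditions make its total change \<open>w'(0)\<^sup>2 \<ge> 0\<close>.\<close>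

lemma third_order_homogeneous_unique:
  fixes w w1 w2 :: "real \<Rightarrow> real"
  assumes "lam > 0" "L > 0"
    and cont: "continuous_on {0..L} w" "continuous_on {0..L} w1" "continuous_on {0..L} w2"
    and dw: "\<And>x. x \<in> {0<..<L} \<Longrightarrow> (w has_real_derivative w1 x) (at x)"
    and dw1: "\<And>x. x \<in> {0<..<L} \<Longrightarrow> (w1 has_real_derivative w2 x) (at x)"
    and dw2: "\<And>x. x \<in> {0<..<L} \<Longrightarrow> (w2 has_real_derivative - lam * w x - w1 x) (at x)"
    and bc: "w 0 = 0" "w L = 0" "w1 L = 0"
    and x: "x \<in> {0..L}"
  shows "w x = 0" "w1 x = 0" "w2 x = 0"
proof -
  define H where "H t = 2 * (w2 t * w t) - w1 t * w1 t + w t * w t" for t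
  have energy: "((\<lambda>x. - 2 * lam * (w x * w x)) has_integral (H L - H 0)) {0..L}"
  proof (rule fundamental_theorem_of_calculus_interior)
    show "continuous_on {0..L} H" unfolding H_def[abs_def] by (intro continuous_intros cont)
    fix x assume x: "x \<in> {0<..<L}"
    have "(H has_real_derivative - 2 * lam * (w x * w x)) (at x)"
      using DERIV_add[OF DERIV_diff[OF DERIV_cmult[OF DERIV_mult[OF dw2[OF x] dw[OF x]]]
          DERIV_mult[OF dw1[OF x] dw1[OF x]]] DERIV_mult[OF dw[OF x] dw[OF x]], of 2]
      unfolding H_def[abs_def] by (simp add: algebra_simps)
    then show "(H has_vector_derivative - 2 * lam * (w x * w x)) (at x)"
      by (simp add: has_real_derivative_iff_has_vector_derivative)
  qed (use assms(2) in simp)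
  have "H L - H 0 = w1 0 * w1 0" unfolding H_def using bc by simp
  with has_integral_neg[OF energy]
  have I: "((\<lambda>x. 2 * lam * (w x * w x)) has_integral - (w1 0 * w1 0)) {0..L}" by simp
  have "0 \<le> - (w1 0 * w1 0)"
    by (rule has_integral_nonneg[OF I]) (use assms(1) in simp)
  then have "w1 0 * w1 0 = 0" by (simp add: le_less)
  with I have I0: "((\<lambda>x. 2 * lam * (w x * w x)) has_integral 0) (cbox 0 L)"
    by (simp add: cbox_interval)
  have w: "w y = 0" if "y \<in> {0..L}" for y
  proof -
    have "2 * lam * (w y * w y) = 0"
      by (rule has_integral_0_cbox_imp_0[OF _ _ I0])
         (use that assms(1,2) in \<open>auto intro!: continuous_intros cont simp: cbox_interval\<close>)
    then show ?thesis using assms(1) by simp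
  qed
  have w1: "w1 y = 0" if "y \<in> {0<..<L}" for y
    using derivative_zero_if_zero_on_open[OF dw[OF that] _ that] w by auto
  have w2: "w2 y = 0" if "y \<in> {0<..<L}" for y
    using derivative_zero_if_zero_on_open[OF dw1[OF that] _ that] w1 by auto
  show "w x = 0" using w x .
  show "w1 x = 0" using zero_on_Icc_if_zero_on_open[OF assms(2) cont(2) w1 x] .
  show "w2 x = 0" using zero_on_Icc_if_zero_on_open[OF assms(2) cont(3) w2 x] .
qed

lemma continuous_root_if_near_linear:
  fixes f :: "real \<Rightarrow> real"
  assumes "continuous_on UNIV f" "w \<noteq> 0" "\<And>c. \<bar>f c - c * w\<bar> \<le> K"
  shows "\<exists>c. f c = 0"
proof -
  define c1 where "c1 = (K + 1) / w"
  define c2 where "c2 = - (K + 1) / w"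
  have "0 \<le> f c1" using assms(3)[of c1] assms(2) unfolding c1_def by (simp add: abs_le_iff)
  moreover have "f c2 \<le> 0" using assms(3)[of c2] assms(2) unfolding c2_def by (simp add: abs_le_iff)
  moreover have "continuous_on {x..y} f" for x y using assms(1) by (rule continuous_on_subset) simp
  ultimately show ?thesis
    using IVT'[of f c2 0 c1] IVT2'[of f c2 0 c1] by (cases "c2 \<le> c1") auto
qed

subsection \<open>Classical solutions are \<open>H\<^sup>3\<close> solutions\<close>

lemma set_integrable_if_continuous:
  fixes f :: "real \<Rightarrow> real"
  assumes "continuous_on {0..L} f"
  shows "set_integrable lborel {0<..<L} f"
  by (rule set_integrable_subset[OF borel_integrable_atLeastAtMost'[OF assms]]) auto

lemma L2_on_if_continuous:
  assumes "continuous_on {0..L} f"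
  shows "L2_on L f"
proof -
  have "set_borel_measurable lborel {0<..<L} f"
    using set_integrable_if_continuous[OF assms]
    unfolding set_integrable_def set_borel_measurable_def by (rule borel_measurable_integrable)
  moreover have "set_integrable lborel {0<..<L} (\<lambda>x. (f x)\<^sup>2)"
    by (intro set_integrable_if_continuous continuous_intros assms)
  ultimately show ?thesis unfolding L2_on_def by blast
qed

lemma set_lebesgue_integral_eq_integral_Icc:
  fixes h :: "real \<Rightarrow> real"
  assumes "continuous_on {0..L} h"
  shows "(LINT x:{0<..<L}|lborel. h x) = integral {0..L} h"
  using set_borel_integral_eq_integral(2)[OF set_integrable_if_continuous[OF assms]]
  by (simp add: integral_open_interval_real)

lemma weak_deriv_if_has_real_derivative:
  assumes "L > 0" "continuous_on {0..L} f" "continuous_on {0..L} g"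
    and deriv: "\<And>x. x \<in> {0<..<L} \<Longrightarrow> (f has_real_derivative g x) (at x)"
  shows "weak_deriv L f g"
  unfolding weak_deriv_def
proof (intro allI impI)
  fix phi assume "test_fun L phi"
  then obtain D e where D0: "D 0 = phi" and dD: "\<And>k x. (D k has_real_derivative D (Suc k) x) (at x)"
    and "e > 0" and vanish: "\<And>x. x < e \<or> x > L - e \<Longrightarrow> phi x = 0"
    unfolding test_fun_def by blast
  have dphi: "(phi has_real_derivative D 1 x) (at x)" for x using dD[of 0 x] D0 by simp
  have "continuous_on S phi" "continuous_on S (D 1)" for S
    using dphi dD[of 1] by (auto intro!: continuous_at_imp_continuous_on DERIV_isCont)
  note cont = this assms(2,3)
  have "((\<lambda>x. g x * phi x + D 1 x * f x) has_integral (f L * phi L - f 0 * phi 0)) {0..L}"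
    by (rule fundamental_theorem_of_calculus_interior)
       (use assms(1) DERIV_mult[OF deriv dphi] in
         \<open>auto intro!: continuous_intros cont simp: has_real_derivative_iff_has_vector_derivative\<close>)
  moreover have "phi L = 0" "phi 0 = 0" using vanish \<open>e > 0\<close> by auto
  ultimately have parts: "((\<lambda>x. g x * phi x + f x * D 1 x) has_integral 0) {0..L}"
    by (simp add: mult.commute)
  have "(\<lambda>x. g x * phi x) integrable_on {0..L}" "(\<lambda>x. f x * D 1 x) integrable_on {0..L}"
    by (intro integrable_continuous_real continuous_intros cont)+
  from integral_add[OF this] integral_unique[OF parts]
  have "integral {0..L} (\<lambda>x. g x * phi x) + integral {0..L} (\<lambda>x. f x * D 1 x) = 0" by simp
  moreover have "deriv phi = D 1" using DERIV_imp_deriv[OF dphi] by blast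
  then have "(LINT x:{0<..<L}|lborel. f x * deriv phi x) = integral {0..L} (\<lambda>x. f x * D 1 x)"
    by (simp only:) (intro set_lebesgue_integral_eq_integral_Icc continuous_intros cont)
  moreover have "(LINT x:{0<..<L}|lborel. g x * phi x) = integral {0..L} (\<lambda>x. g x * phi x)"
    by (intro set_lebesgue_integral_eq_integral_Icc continuous_intros cont)
  ultimately show "(LINT x:{0<..<L}|lborel. f x * deriv phi x) = - (LINT x:{0<..<L}|lborel. g x * phi x)"
    by simp
qed

lemma H3_if_has_real_derivatives:
  assumes "L > 0"
    and cont: "continuous_on {0..L} v" "continuous_on {0..L} v1" "continuous_on {0..L} v2"
      "continuous_on {0..L} v3"
    and "\<And>x. x \<in> {0<..<L} \<Longrightarrow> (v has_real_derivative v1 x) (at x)"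
      "\<And>x. x \<in> {0<..<L} \<Longrightarrow> (v1 has_real_derivative v2 x) (at x)"
      "\<And>x. x \<in> {0<..<L} \<Longrightarrow> (v2 has_real_derivative v3 x) (at x)"
  shows "H3 L v v1 v2 v3"
  unfolding H3_def using assms
  by (auto intro!: L2_on_if_continuous weak_deriv_if_has_real_derivative)

subsection \<open>Shooting\<close>

locale shooting =
  fixes L lam u0 a :: real and u :: "real \<Rightarrow> real"
  assumes L: "L > 0" and lam: "lam > 0" and a: "a \<ge> 0" and u0: "u0 \<ge> 0"
    and u: "continuous_on {0..L} u"
begin

definition M :: real where "M = lam + a + 2"

definition shoot :: "real \<Rightarrow> real" where
  "shoot c = tail_int L (tail_int L (shooting_fixpoint L lam u0 a u c)) 0"

definition linear_fixpoint :: "real \<Rightarrow> real" where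
  "linear_fixpoint = shooting_fixpoint L lam u0 0 (\<lambda>_. 0) 1"

definition linear_shot :: real where
  "linear_shot = tail_int L (tail_int L linear_fixpoint) 0"

lemma M_pos: "M > 0"
  using lam a unfolding M_def by simp

lemmas fixpoint_cont = continuous_on_shooting_fixpoint[OF less_imp_le[OF L] less_imp_le[OF lam] a u0 u]
lemmas fixpoint_eq = shooting_fixpoint_eq[OF less_imp_le[OF L] less_imp_le[OF lam] a u0 u]

lemma linear_fixpoint: "continuous_on {0..L} linear_fixpoint"
    "t \<in> {0..L} \<Longrightarrow> linear_fixpoint t = shooting_map L lam u0 0 (\<lambda>_. 0) 1 linear_fixpoint t"
  unfolding linear_fixpoint_def using L lam u0
  by (auto intro!: continuous_on_shooting_fixpoint shooting_fixpoint_eq)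

lemma fixpoint_shot_stability:
  assumes "0 \<le> a'" "a' \<le> a" "continuous_on {0..L} v"
    and p: "continuous_on {0..L} p" "\<And>t. t \<in> {0..L} \<Longrightarrow> p t = T p t"
    and q: "continuous_on {0..L} q" "\<And>t. t \<in> {0..L} \<Longrightarrow> q t = shooting_map L lam u0 a' v d q t"
    and close: "\<And>t. t \<in> {0..L} \<Longrightarrow> \<bar>T p t - shooting_map L lam u0 a' v d p t\<bar> \<le> \<alpha>"
  shows "\<bar>tail_int L (tail_int L p) 0 - tail_int L (tail_int L q) 0\<bar> \<le> 2 * \<alpha> / M / M * exp (M * L)"
proof -
  have "0 \<in> {0..L}" using L by simp
  from close[OF this] have "\<alpha> \<ge> 0" by (rule order_trans[OF abs_ge_zero])
  have close_exp: "\<bar>T p t - shooting_map L lam u0 a' v d p t\<bar> \<le> \<alpha> * exp (M * (L - t))"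
    if "t \<in> {0..L}" for t
  proof -
    have "1 \<le> exp (M * (L - t))" using M_pos that by simp
    from close[OF that] mult_left_mono[OF this \<open>\<alpha> \<ge> 0\<close>] show ?thesis by simp
  qed
  have S: "weighted_contraction {0..L} (\<lambda>t. exp (M * (L - t))) (shooting_map L lam u0 a' v d)"
    by (rule shooting_map_weighted_contraction) (use assms(1-3) lam u0 in \<open>auto simp: M_def\<close>)
  have "\<bar>p t - q t\<bar> \<le> 2 * \<alpha> * exp (M * (L - t))" if "t \<in> {0..L}" for t
    by (rule fixpoint_stability[where T = T, OF compact_Icc _ _ S p q close_exp that])
       (auto intro!: continuous_intros)
  from abs_tail_int2_diff_le_exp[OF p(1) q(1) M_pos \<open>0 \<in> {0..L}\<close> this] show ?thesis by simp
qed

lemma shoot_lipschitz: "\<bar>shoot c - shoot d\<bar> \<le> 2 * \<bar>c - d\<bar> / M / M * exp (M * L)"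
  unfolding shoot_def
  by (rule fixpoint_shot_stability[where a' = a and v = u and T = "shooting_map L lam u0 a u c" and d = d])
     (simp_all add: a u fixpoint_cont fixpoint_eq shooting_map_def)

lemma continuous_shoot: "continuous_on UNIV shoot"
proof (rule lipschitz_on_continuous_on[OF lipschitz_onI])
  fix c d
  show "dist (shoot c) (shoot d) \<le> 2 / M / M * exp (M * L) * dist c d"
    using shoot_lipschitz[of c d] by (simp add: dist_real_def mult_ac)
qed (use M_pos in simp)

text \<open>Since \<open>sat\<close> is bounded, the nonlinear problem is a bounded perturbation of the linear one,
  whose fixed points scale linearly in \<open>c\<close>.\<close>

lemma shoot_near_linear: "\<exists>K. \<forall>c. \<bar>shoot c - c * linear_shot\<bar> \<le> K"
proof -
  obtain U where "\<forall>y\<in>u ` {0..L}. norm y \<le> U"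
    using compact_imp_bounded[OF compact_continuous_image[OF u compact_Icc]]
    unfolding bounded_iff by blast
  then have U: "\<And>x. x \<in> {0..L} \<Longrightarrow> \<bar>u x\<bar> \<le> U" by simp
  have "\<bar>shoot c - c * linear_shot\<bar> \<le> 2 * ((lam * U + a * u0) * L) / M / M * exp (M * L)" for c
  proof -
    let ?p = "shooting_fixpoint L lam u0 a u c" and ?q = "\<lambda>s. c * linear_fixpoint s"
    have q_fixed: "?q t = shooting_map L lam u0 0 (\<lambda>_. 0) c ?q t" if "t \<in> {0..L}" for t
      using linear_fixpoint(2)[OF that]
      by (simp add: shooting_map_def shooting_rhs_linear_scale tail_int_cmult right_diff_distrib)
    have close: "\<bar>shooting_map L lam u0 a u c ?p t - shooting_map L lam u0 0 (\<lambda>_. 0) c ?p t\<bar>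
        \<le> (lam * U + a * u0) * L" if t: "t \<in> {0..L}" for t
    proof -
      let ?S = "\<lambda>s. sat u0 (tail_int L (tail_int L ?p) s)"
      have "shooting_map L lam u0 a u c ?p t - shooting_map L lam u0 0 (\<lambda>_. 0) c ?p t
          = tail_int L (\<lambda>s. shooting_rhs L lam u0 0 (\<lambda>_. 0) ?p s - shooting_rhs L lam u0 a u ?p s) t"
        unfolding shooting_map_def
        using tail_int_diff[OF continuous_on_shooting_rhs[OF u0 continuous_on_const fixpoint_cont]
            continuous_on_shooting_rhs[OF u0 u fixpoint_cont] t] by simp
      also have "(\<lambda>s. shooting_rhs L lam u0 0 (\<lambda>_. 0) ?p s - shooting_rhs L lam u0 a u ?p s)
          = (\<lambda>s. a * ?S s - lam * u s)"
        by (simp add: fun_eq_iff shooting_rhs_def)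
      finally have "\<bar>shooting_map L lam u0 a u c ?p t - shooting_map L lam u0 0 (\<lambda>_. 0) c ?p t\<bar>
          = \<bar>tail_int L (\<lambda>s. a * ?S s - lam * u s) t\<bar>" by simp
      also have "\<dots> \<le> (lam * U + a * u0) * L"
      proof (rule abs_tail_int_le[OF _ t])
        show "continuous_on {0..L} (\<lambda>s. a * ?S s - lam * u s)"
          by (intro continuous_intros continuous_on_sat continuous_on_tail_int fixpoint_cont u u0)
        fix s assume s: "s \<in> {0..L}"
        have "\<bar>a * ?S s - lam * u s\<bar> \<le> \<bar>a * ?S s\<bar> + \<bar>lam * u s\<bar>"
          by (rule abs_triangle_ineq4)
        also have "\<dots> = a * \<bar>?S s\<bar> + lam * \<bar>u s\<bar>"
          using lam a by (simp add: abs_mult)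
        also have "\<dots> \<le> a * u0 + lam * U"
          using U[OF s] abs_sat_le[OF u0] lam a by (intro add_mono mult_left_mono) auto
        finally show "\<bar>a * ?S s - lam * u s\<bar> \<le> lam * U + a * u0" by simp
      qed
      finally show ?thesis .
    qed
    have "\<bar>tail_int L (tail_int L ?p) 0 - tail_int L (tail_int L ?q) 0\<bar>
        \<le> 2 * ((lam * U + a * u0) * L) / M / M * exp (M * L)"
      by (rule fixpoint_shot_stability[where a' = 0 and v = "\<lambda>_. 0" and T = "shooting_map L lam u0 a u c"])
         (use q_fixed close a in \<open>auto intro!: continuous_intros linear_fixpoint(1) fixpoint_cont fixpoint_eq\<close>)
    then show ?thesis unfolding shoot_def linear_shot_def tail_int_cmult .
  qed
  then show ?thesis by blast
qed

lemma linear_shot_nonzero: "linear_shot \<noteq> 0"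
proof
  assume "linear_shot = 0"
  let ?w = "tail_int L (tail_int L linear_fixpoint)" and ?w1 = "\<lambda>t. - tail_int L linear_fixpoint t"
  have cont: "continuous_on {0..L} ?w" "continuous_on {0..L} ?w1"
    by (intro continuous_intros continuous_on_tail_int linear_fixpoint(1))+
  have derivs: "(?w has_real_derivative ?w1 x) (at x)" "(?w1 has_real_derivative linear_fixpoint x) (at x)"
    if "x \<in> {0<..<L}" for x
    using tail_int2_has_real_derivatives[OF linear_fixpoint(1) that] by simp_all
  have "(linear_fixpoint has_real_derivative - lam * ?w x - ?w1 x) (at x)" if "x \<in> {0<..<L}" for x
    using shooting_fixpoint_has_real_derivative[OF u0 continuous_on_const linear_fixpoint that]
    by (simp add: shooting_rhs_def)
  moreover have "?w 0 = 0" using \<open>linear_shot = 0\<close> unfolding linear_shot_def .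
  ultimately have "linear_fixpoint L = 0"
    using third_order_homogeneous_unique(3)[OF lam L cont linear_fixpoint(1) derivs] L by simp
  moreover have "linear_fixpoint L = 1" using linear_fixpoint(2)[of L] L by (simp add: shooting_map_def)
  ultimately show False by simp
qed

lemma classical_solution:
  obtains v v1 v2 v3 where "H3 L v v1 v2 v3" "v 0 = 0" "v L = 0" "v1 L = 0"
    "\<And>x. x \<in> {0<..<L} \<Longrightarrow> lam * v x + v3 x + v1 x + a * sat u0 (v x) = lam * u x"
proof -
  obtain c where c: "shoot c = 0"
    using continuous_root_if_near_linear[OF continuous_shoot linear_shot_nonzero] shoot_near_linear
    by blast
  let ?p = "shooting_fixpoint L lam u0 a u c"
  show ?thesis
  proof (rule that)
    show "H3 L (tail_int L (tail_int L ?p)) (\<lambda>t. - tail_int L ?p t) ?p (shooting_rhs L lam u0 a u ?p)"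
      using tail_int2_has_real_derivatives[OF fixpoint_cont]
        shooting_fixpoint_has_real_derivative[OF u0 u fixpoint_cont fixpoint_eq]
      by (intro H3_if_has_real_derivatives L continuous_on_shooting_rhs continuous_intros
          continuous_on_tail_int fixpoint_cont u0 u) auto
    show "tail_int L (tail_int L ?p) 0 = 0" using c unfolding shoot_def .
  qed (simp_all add: shooting_rhs_def)
qed

end

theorem mainTheorem4:
  fixes L a u0 lam :: real and u u1 u2 u3 :: "real \<Rightarrow> real"
  assumes "L > 0" and "a > 0" and "u0 > 0" and "lam > 0"
    and "H3 L u u1 u2 u3" and "u 0 = 0" and "u L = 0" and "u1 L = 0"
  shows "\<exists>v v1 v2 v3. H3 L v v1 v2 v3 \<and> v 0 = 0 \<and> v L = 0 \<and> v1 L = 0 \<and>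
           (AE x in lborel. x \<in> {0<..<L} \<longrightarrow>
              lam * v x + v3 x + v1 x + a * sat u0 (v x) = lam * u x)"
proof -
  \<comment> \<open>Only the continuity of \<open>u\<close> is used; its boundary values play no role.\<close>
  have "continuous_on {0..L} u" using assms(5) unfolding H3_def by blast
  then interpret shooting L lam u0 a u
    using assms(1-4) by unfold_locales auto
  obtain v v1 v2 v3 where "H3 L v v1 v2 v3" "v 0 = 0" "v L = 0" "v1 L = 0"
    and "\<And>x. x \<in> {0<..<L} \<Longrightarrow> lam * v x + v3 x + v1 x + a * sat u0 (v x) = lam * u x"
    using classical_solution by blast
  then show ?thesis by (intro exI[of _ v] exI[of _ v1] exI[of _ v2] exI[of _ v3]) (auto intro: AE_I2)
qed

end
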